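(* Let $F=(f_1,\dots,f_n)$ be twice-differentiable objective functions $\mathbb{R}^d\to\mathbb{R}$ with $\mu\mathbf{I}\preceq\nabla^2f_i\preceq L\mathbf{I}$ for all $i$ (where $0<\mu\le L$), and let $R:=\mathrm{diam}(\mathrm{Pareto}(F))$. Then the map $x^*:(\Delta^{n-1},\ell_1)\to(\mathbb{R}^d,\ell_2)$, $x^*(\beta)=\operatorname{argmin}_x\sum_i\beta_if_i(x)$, is $LR/\mu$-Lipschitz.
   Context: $\Delta^{n-1}$ is the simplex of convex weights. A point $x$ is Pareto optimal if for all $x'$, $f_i(x')<f_i(x)$ for some $i$ implies $f_j(x')>f_j(x)$ for some $j$; $\mathrm{Pareto}(F)$ is the set of Pareto optimal points, and $\mathrm{diam}$ is taken in $\ell_2$. *)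

theory Defs
  imports "HOL-Analysis.Analysis"
begin

definition pareto_set :: "('i \<Rightarrow> 'a \<Rightarrow> real) \<Rightarrow> 'a set" where
  "pareto_set f = {x. \<forall>x'. (\<exists>i. f i x' < f i x) \<longrightarrow> (\<exists>j. f j x' > f j x)}"

definition simplex_weights :: "('i::finite \<Rightarrow> real) set" where
  "simplex_weights = {\<beta>. (\<forall>i. 0 \<le> \<beta> i) \<and> (\<Sum>i\<in>UNIV. \<beta> i) = 1}"

definition is_weighted_argmin :: "('i::finite \<Rightarrow> 'a \<Rightarrow> real) \<Rightarrow> ('i \<Rightarrow> real) \<Rightarrow> 'a \<Rightarrow> bool" where
  "is_weighted_argmin f \<beta> x \<longleftrightarrow> (\<forall>y. (\<Sum>i\<in>UNIV. \<beta> i * f i x) \<le> (\<Sum>i\<in>UNIV. \<beta> i * f i y))"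

end

theory Submission
  imports Defs
begin

text \<open>Strong convexity makes every weighted argmin \<open>x\<^sup>*(\<beta>)\<close> unique, hence Pareto optimal,
  and makes each gradient strongly monotone, so that
  \<open>\<mu> \<parallel>x' - x\<parallel>\<^sup>2 \<le> \<Sum>\<^sub>i \<beta>\<^sub>i (\<nabla>f\<^sub>i x' - \<nabla>f\<^sub>i x) \<bullet> (x' - x)\<close>.
  The first-order conditions \<open>\<Sum>\<^sub>i \<beta>\<^sub>i \<nabla>f\<^sub>i x = 0 = \<Sum>\<^sub>i \<beta>'\<^sub>i \<nabla>f\<^sub>i x'\<close> turn the right-hand side
  into \<open>\<Sum>\<^sub>i (\<beta>\<^sub>i - \<beta>'\<^sub>i) \<nabla>f\<^sub>i x' \<bullet> (x' - x)\<close>. Finally \<open>L\<close>-smoothness gives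
  \<open>\<parallel>\<nabla>f\<^sub>i x'\<parallel> \<le> L \<parallel>x' - m\<^sub>i\<parallel>\<close> for the minimiser \<open>m\<^sub>i\<close> of \<open>f\<^sub>i\<close>, and both \<open>x'\<close> and \<open>m\<^sub>i\<close> are
  Pareto optimal, so this is at most \<open>L R\<close>.\<close>

lemma taylor_second_order_unit_interval:
  fixes p p' p'' :: "real \<Rightarrow> real"
  assumes "\<And>t. (p has_real_derivative p' t) (at t)"
    and "\<And>t. (p' has_real_derivative p'' t) (at t)"
  obtains t where "p 1 = p 0 + p' 0 + p'' t / 2"
proof -
  define diff where "diff k = (if k = 0 then p else if k = 1 then p' else p'')" for k :: nat
  have "\<forall>m t. m < 2 \<and> 0 \<le> t \<and> t \<le> 1 \<longrightarrow> (diff m has_real_derivative diff (Suc m) t) (at t)"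
    using assms by (auto simp: diff_def less_2_cases_iff)
  then obtain t where "p 1 = (\<Sum>m<2. diff m 0 / fact m * 1 ^ m) + diff 2 t / fact 2 * 1 ^ 2"
    using Maclaurin2[of 1 diff p 2] by (auto simp: diff_def)
  then show thesis
    by (intro that[of t]) (simp add: diff_def numeral_2_eq_2)
qed

lemma has_real_derivative_along_line:
  fixes F :: "'a::euclidean_space \<Rightarrow> real"
  assumes "\<And>x. (F has_derivative (\<lambda>h. G x \<bullet> h)) (at x)"
  shows "((\<lambda>t. F (x + t *\<^sub>R v)) has_real_derivative G (x + t *\<^sub>R v) \<bullet> v) (at t)"
  unfolding has_field_derivative_def
  by (rule has_derivative_eq_rhs, rule has_derivative_compose[OF _ assms])
     (auto intro!: derivative_eq_intros)

lemma has_real_derivative_directional_gradient: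
  fixes G :: "'a::euclidean_space \<Rightarrow> 'a"
  assumes "\<And>x. (G has_derivative H x) (at x)"
  shows "((\<lambda>t. G (x + t *\<^sub>R v) \<bullet> v) has_real_derivative v \<bullet> H (x + t *\<^sub>R v) v) (at t)"
proof -
  have "linear (H (x + t *\<^sub>R v))" using assms has_derivative_linear by blast
  then show ?thesis
    unfolding has_field_derivative_def
    by (intro has_derivative_eq_rhs[OF has_derivative_inner_left[OF has_derivative_compose[OF _ assms]]])
       (auto intro!: derivative_eq_intros simp: linear_scale inner_commute)
qed

lemma taylor_second_order_along_line:
  fixes F :: "'a::euclidean_space \<Rightarrow> real"
  assumes "\<And>x. (F has_derivative (\<lambda>h. G x \<bullet> h)) (at x)"
    and "\<And>x. (G has_derivative H x) (at x)"
  obtains z where "F y = F x + G x \<bullet> (y - x) + (y - x) \<bullet> H z (y - x) / 2"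
proof -
  let ?v = "y - x"
  obtain t where "F (x + 1 *\<^sub>R ?v) = F (x + 0 *\<^sub>R ?v) + G (x + 0 *\<^sub>R ?v) \<bullet> ?v
      + ?v \<bullet> H (x + t *\<^sub>R ?v) ?v / 2"
    by (rule taylor_second_order_unit_interval[OF has_real_derivative_along_line[OF assms(1)]
          has_real_derivative_directional_gradient[OF assms(2)]])
  then show thesis by (intro that[of "x + t *\<^sub>R ?v"]) simp
qed

lemma quadratic_upper_bound_of_hessian:
  fixes F :: "'a::euclidean_space \<Rightarrow> real"
  assumes "\<And>x. (F has_derivative (\<lambda>h. G x \<bullet> h)) (at x)"
    and "\<And>x. (G has_derivative H x) (at x)"
    and "\<And>x v. v \<bullet> H x v \<le> M * (norm v)\<^sup>2"
  shows "F y \<le> F x + G x \<bullet> (y - x) + M / 2 * (norm (y - x))\<^sup>2"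
proof -
  obtain z where "F y = F x + G x \<bullet> (y - x) + (y - x) \<bullet> H z (y - x) / 2"
    by (rule taylor_second_order_along_line[OF assms(1,2)])
  then show ?thesis using assms(3)[where x = z and v = "y - x"] by simp
qed

lemma quadratic_lower_bound_of_hessian:
  fixes F :: "'a::euclidean_space \<Rightarrow> real"
  assumes "\<And>x. (F has_derivative (\<lambda>h. G x \<bullet> h)) (at x)"
    and "\<And>x. (G has_derivative H x) (at x)"
    and "\<And>x v. m * (norm v)\<^sup>2 \<le> v \<bullet> H x v"
  shows "F x + G x \<bullet> (y - x) + m / 2 * (norm (y - x))\<^sup>2 \<le> F y"
proof -
  obtain z where "F y = F x + G x \<bullet> (y - x) + (y - x) \<bullet> H z (y - x) / 2"
    by (rule taylor_second_order_along_line[OF assms(1,2)])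
  then show ?thesis using assms(3)[where x = z and v = "y - x"] by simp
qed

lemma gradient_eq_0_at_global_minimum:
  fixes F :: "'a::real_inner \<Rightarrow> real"
  assumes "(F has_derivative (\<lambda>h. g \<bullet> h)) (at z)" and "\<And>y. F z \<le> F y"
  shows "g = 0"
proof -
  have "(\<lambda>h. g \<bullet> h) = (\<lambda>h. 0)"
    by (rule differential_zero_maxmin[of z UNIV F]) (use assms in auto)
  then have "g \<bullet> g = 0" by metis
  then show ?thesis by simp
qed

lemma strongly_convex_attains_minimum:
  fixes F :: "'a::euclidean_space \<Rightarrow> real"
  assumes "0 < m" and "continuous_on UNIV F"
    and lower: "\<And>x y. F x + G x \<bullet> (y - x) + m / 2 * (norm (y - x))\<^sup>2 \<le> F y"
  obtains z where "\<And>y. F z \<le> F y"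
proof -
  define r where "r = 2 * norm (G 0) / m"
    \<comment> \<open>outside \<open>cball 0 r\<close> the lower bound taken at \<open>0\<close> already exceeds \<open>F 0\<close>\<close>
  have "cball 0 r \<noteq> {}" using \<open>0 < m\<close> by (simp add: r_def not_less)
  then obtain z where z: "z \<in> cball 0 r" "\<And>y. y \<in> cball 0 r \<Longrightarrow> F z \<le> F y"
    using continuous_attains_inf[OF compact_cball _ continuous_on_subset[OF assms(2)]] by blast
  have "F z \<le> F y" for y
  proof (cases "y \<in> cball 0 r")
    case False
    then have "2 * norm (G 0) \<le> m * norm y"
      using \<open>0 < m\<close> by (simp add: r_def field_simps)
    then have "2 * norm (G 0) * norm y \<le> m * norm y * norm y" by (rule mult_right_mono) simp
    then have "norm (G 0) * norm y \<le> m / 2 * (norm y)\<^sup>2" by (simp add: power2_eq_square)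
    moreover have "- (norm (G 0) * norm y) \<le> G 0 \<bullet> y"
      using Cauchy_Schwarz_ineq2[of "G 0" y] by linarith
    moreover have "F 0 + G 0 \<bullet> y + m / 2 * (norm y)\<^sup>2 \<le> F y"
      using lower[of 0 y] by simp
    moreover have "F z \<le> F 0" using z \<open>0 < m\<close> by (simp add: r_def)
    ultimately show ?thesis by linarith
  qed (use z in auto)
  then show thesis by (rule that)
qed

lemma norm_gradient_le_of_quadratic_upper_bound:
  fixes F :: "'a::real_inner \<Rightarrow> real"
  assumes "0 < M"
    and upper: "\<And>x y. F y \<le> F x + G x \<bullet> (y - x) + M / 2 * (norm (y - x))\<^sup>2"
    and min: "\<And>y. F z \<le> F y" and "G z = 0"
  shows "norm (G p) \<le> M * norm (p - z)"
proof -
  let ?g = "G p"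
  \<comment> \<open>a gradient step of length \<open>1 / M\<close> from \<open>p\<close> decreases \<open>F\<close> by at least \<open>\<parallel>G p\<parallel>\<^sup>2 / (2 M)\<close>\<close>
  have "F z \<le> F (p - (1 / M) *\<^sub>R ?g)" by (rule min)
  also have "\<dots> \<le> F p + ?g \<bullet> ((p - (1 / M) *\<^sub>R ?g) - p) + M / 2 * (norm ((p - (1 / M) *\<^sub>R ?g) - p))\<^sup>2"
    by (rule upper)
  also have "\<dots> = F p - (norm ?g)\<^sup>2 / (2 * M)"
    using \<open>0 < M\<close> by (simp add: power_mult_distrib dot_square_norm power2_eq_square field_simps)
  also have "F p \<le> F z + M / 2 * (norm (p - z))\<^sup>2"
    using upper[where x = z and y = p] \<open>G z = 0\<close> by simp
  finally have "(norm ?g)\<^sup>2 \<le> (M * norm (p - z))\<^sup>2"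
    using \<open>0 < M\<close> by (simp add: field_simps power_mult_distrib power2_eq_square)
  then show ?thesis by (rule power2_le_imp_le) (use \<open>0 < M\<close> in simp)
qed

lemma unique_weighted_argmin_in_pareto_set:
  fixes f :: "'i::finite \<Rightarrow> 'a \<Rightarrow> real"
  assumes "\<And>i. 0 \<le> \<beta> i"
    and unique: "\<And>y. y \<noteq> z \<Longrightarrow> (\<Sum>i\<in>UNIV. \<beta> i * f i z) < (\<Sum>i\<in>UNIV. \<beta> i * f i y)"
  shows "z \<in> pareto_set f"
  unfolding pareto_set_def
proof (intro CollectI allI impI, rule ccontr)
  fix y assume better: "\<exists>i. f i y < f i z" and "\<not> (\<exists>j. f j z < f j y)"
  then have "\<And>j. f j y \<le> f j z" by (meson not_le)
  then have "(\<Sum>i\<in>UNIV. \<beta> i * f i y) \<le> (\<Sum>i\<in>UNIV. \<beta> i * f i z)"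
    by (intro sum_mono mult_left_mono) (use assms(1) in auto)
  moreover have "y \<noteq> z" using better by auto
  ultimately show False using unique by (simp add: not_less[symmetric])
qed

lemma pareto_set_subset_sublevel_sets: "pareto_set f \<subseteq> (\<Union>i. {p. f i p \<le> f i y})"
proof
  fix p assume "p \<in> pareto_set f"
  then have "\<not> (\<forall>i. f i y < f i p)"
    unfolding pareto_set_def by (auto dest: order.asym)
  then show "p \<in> (\<Union>i. {p. f i p \<le> f i y})" by (auto simp: not_less)
qed

lemma sq_norm_diff_weighted_critical_points_le:
  fixes g :: "'i::finite \<Rightarrow> 'a::real_inner \<Rightarrow> 'a"
  assumes "\<beta> \<in> simplex_weights"
    and monotone: "\<And>i. m * (norm (x' - x))\<^sup>2 \<le> (g i x' - g i x) \<bullet> (x' - x)"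
    and critical: "(\<Sum>i\<in>UNIV. \<beta> i *\<^sub>R g i x) = 0"
    and critical': "(\<Sum>i\<in>UNIV. \<beta>' i *\<^sub>R g i x') = 0"
    and bound: "\<And>i. norm (g i x') \<le> C"
  shows "m * (norm (x' - x))\<^sup>2 \<le> (\<Sum>i\<in>UNIV. \<bar>\<beta> i - \<beta>' i\<bar>) * C * norm (x' - x)"
proof -
  define d where "d = x' - x"
  have \<beta>: "\<And>i. 0 \<le> \<beta> i" "(\<Sum>i\<in>UNIV. \<beta> i) = 1"
    using assms(1) by (auto simp: simplex_weights_def)
  have "m * (norm d)\<^sup>2 = (\<Sum>i\<in>UNIV. \<beta> i * (m * (norm d)\<^sup>2))"
    by (simp add: sum_distrib_right[symmetric] \<beta>(2))
  also have "\<dots> \<le> (\<Sum>i\<in>UNIV. \<beta> i * ((g i x' - g i x) \<bullet> d))"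
    unfolding d_def by (intro sum_mono mult_left_mono monotone \<beta>(1))
  also have "\<dots> = (\<Sum>i\<in>UNIV. \<beta> i * (g i x' \<bullet> d)) - (\<Sum>i\<in>UNIV. \<beta> i *\<^sub>R g i x) \<bullet> d"
    by (simp add: inner_diff_left right_diff_distrib sum_subtractf inner_sum_left)
  also have "\<dots> = (\<Sum>i\<in>UNIV. \<beta> i * (g i x' \<bullet> d)) - (\<Sum>i\<in>UNIV. \<beta>' i *\<^sub>R g i x') \<bullet> d"
    using critical critical' by simp
  also have "\<dots> = (\<Sum>i\<in>UNIV. (\<beta> i - \<beta>' i) * (g i x' \<bullet> d))"
    by (simp add: inner_sum_left left_diff_distrib sum_subtractf)
  also have "\<dots> \<le> (\<Sum>i\<in>UNIV. \<bar>\<beta> i - \<beta>' i\<bar> * (C * norm d))"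
  proof (intro sum_mono)
    fix i
    have "\<bar>g i x' \<bullet> d\<bar> \<le> C * norm d"
      using Cauchy_Schwarz_ineq2[of "g i x'" d] mult_right_mono[OF bound norm_ge_zero]
      by (rule order_trans)
    then have "\<bar>\<beta> i - \<beta>' i\<bar> * \<bar>g i x' \<bullet> d\<bar> \<le> \<bar>\<beta> i - \<beta>' i\<bar> * (C * norm d)"
      by (rule mult_left_mono) simp
    then show "(\<beta> i - \<beta>' i) * (g i x' \<bullet> d) \<le> \<bar>\<beta> i - \<beta>' i\<bar> * (C * norm d)"
      using abs_ge_self[of "(\<beta> i - \<beta>' i) * (g i x' \<bullet> d)"] by (simp add: abs_mult)
  qed
  also have "\<dots> = (\<Sum>i\<in>UNIV. \<bar>\<beta> i - \<beta>' i\<bar>) * C * norm d"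
    by (simp add: sum_distrib_right mult.assoc)
  finally show ?thesis unfolding d_def .
qed

lemma norm_diff_weighted_critical_points_le:
  fixes g :: "'i::finite \<Rightarrow> 'a::real_inner \<Rightarrow> 'a"
  assumes "0 < m" and "\<beta> \<in> simplex_weights"
    and "\<And>i. m * (norm (x' - x))\<^sup>2 \<le> (g i x' - g i x) \<bullet> (x' - x)"
    and "(\<Sum>i\<in>UNIV. \<beta> i *\<^sub>R g i x) = 0" and "(\<Sum>i\<in>UNIV. \<beta>' i *\<^sub>R g i x') = 0"
    and bound: "\<And>i. norm (g i x') \<le> C"
  shows "norm (x - x') \<le> C / m * (\<Sum>i\<in>UNIV. \<bar>\<beta> i - \<beta>' i\<bar>)"
proof (cases "x = x'")
  case True
  have "0 \<le> C" by (rule order_trans[OF norm_ge_zero bound])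
  then show ?thesis using True \<open>0 < m\<close> by (simp add: sum_nonneg)
next
  case False
  let ?S = "\<Sum>i\<in>UNIV. \<bar>\<beta> i - \<beta>' i\<bar>"
  have "(m * norm (x' - x)) * norm (x' - x) \<le> (?S * C) * norm (x' - x)"
    using sq_norm_diff_weighted_critical_points_le[OF assms(2-)]
    by (simp add: power2_eq_square mult.assoc)
  then have "m * norm (x' - x) \<le> ?S * C"
    by (rule mult_right_le_imp_le) (use False in simp)
  then show ?thesis using \<open>0 < m\<close> by (simp add: field_simps norm_minus_commute)
qed

locale strongly_convex_family =
  fixes f :: "'i::finite \<Rightarrow> 'a::euclidean_space \<Rightarrow> real"
    and grad :: "'i \<Rightarrow> 'a \<Rightarrow> 'a"
    and \<mu> :: real
  assumes mu_pos: "0 < \<mu>"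
    and has_derivative_f: "\<And>i x. (f i has_derivative (\<lambda>h. grad i x \<bullet> h)) (at x)"
    and quadratic_lower_bound:
      "\<And>i x y. f i x + grad i x \<bullet> (y - x) + \<mu> / 2 * (norm (y - x))\<^sup>2 \<le> f i y"
begin

lemma gradient_strongly_monotone: "\<mu> * (norm (y - x))\<^sup>2 \<le> (grad i y - grad i x) \<bullet> (y - x)"
  using quadratic_lower_bound[of i x y] quadratic_lower_bound[of i y x]
  by (simp add: inner_diff_left inner_diff_right norm_minus_commute algebra_simps)

lemma grad_eq_0_at_minimizer:
  assumes "\<And>y. f i z \<le> f i y"
  shows "grad i z = 0"
  using gradient_eq_0_at_global_minimum[OF has_derivative_f assms] .

lemma weighted_gradient_eq_0:
  assumes "is_weighted_argmin f \<beta> z"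
  shows "(\<Sum>i\<in>UNIV. \<beta> i *\<^sub>R grad i z) = 0"
proof (rule gradient_eq_0_at_global_minimum)
  have "((\<lambda>y. \<Sum>i\<in>UNIV. \<beta> i * f i y) has_derivative (\<lambda>h. \<Sum>i\<in>UNIV. \<beta> i * (grad i z \<bullet> h))) (at z)"
    by (intro has_derivative_sum has_derivative_mult_right has_derivative_f)
  then show "((\<lambda>y. \<Sum>i\<in>UNIV. \<beta> i * f i y) has_derivative (\<lambda>h. (\<Sum>i\<in>UNIV. \<beta> i *\<^sub>R grad i z) \<bullet> h)) (at z)"
    by (rule has_derivative_eq_rhs) (simp add: fun_eq_iff inner_sum_left)
  show "\<And>y. (\<Sum>i\<in>UNIV. \<beta> i * f i z) \<le> (\<Sum>i\<in>UNIV. \<beta> i * f i y)"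
    using assms unfolding is_weighted_argmin_def by blast
qed

lemma weighted_quadratic_lower_bound:
  assumes "\<beta> \<in> simplex_weights"
  shows "(\<Sum>i\<in>UNIV. \<beta> i * f i x) + (\<Sum>i\<in>UNIV. \<beta> i *\<^sub>R grad i x) \<bullet> (y - x)
      + \<mu> / 2 * (norm (y - x))\<^sup>2 \<le> (\<Sum>i\<in>UNIV. \<beta> i * f i y)"
proof -
  have \<beta>: "\<And>i. 0 \<le> \<beta> i" "(\<Sum>i\<in>UNIV. \<beta> i) = 1"
    using assms by (auto simp: simplex_weights_def)
  have "(\<Sum>i\<in>UNIV. \<beta> i * f i x) + (\<Sum>i\<in>UNIV. \<beta> i *\<^sub>R grad i x) \<bullet> (y - x)
      + \<mu> / 2 * (norm (y - x))\<^sup>2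
      = (\<Sum>i\<in>UNIV. \<beta> i * f i x) + (\<Sum>i\<in>UNIV. \<beta> i * (grad i x \<bullet> (y - x)))
      + (\<Sum>i\<in>UNIV. \<beta> i) * (\<mu> / 2 * (norm (y - x))\<^sup>2)"
    by (simp add: inner_sum_left \<beta>(2))
  also have "\<dots> = (\<Sum>i\<in>UNIV. \<beta> i * (f i x + grad i x \<bullet> (y - x) + \<mu> / 2 * (norm (y - x))\<^sup>2))"
    by (simp add: distrib_left sum.distrib sum_distrib_right)
  also have "\<dots> \<le> (\<Sum>i\<in>UNIV. \<beta> i * f i y)"
    by (intro sum_mono mult_left_mono quadratic_lower_bound \<beta>(1))
  finally show ?thesis .
qed

lemma weighted_argmin_in_pareto_set:
  assumes "\<beta> \<in> simplex_weights" and "is_weighted_argmin f \<beta> z"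
  shows "z \<in> pareto_set f"
proof (rule unique_weighted_argmin_in_pareto_set)
  show "\<And>i. 0 \<le> \<beta> i" using assms(1) by (simp add: simplex_weights_def)
  fix y assume "y \<noteq> z"
  then have "0 < \<mu> / 2 * (norm (y - z))\<^sup>2" using mu_pos by simp
  then show "(\<Sum>i\<in>UNIV. \<beta> i * f i z) < (\<Sum>i\<in>UNIV. \<beta> i * f i y)"
    using weighted_quadratic_lower_bound[OF assms(1), of z y] weighted_gradient_eq_0[OF assms(2)]
    by simp
qed

lemma minimizer_in_pareto_set:
  assumes "\<And>y. f i z \<le> f i y"
  shows "z \<in> pareto_set f"
proof -
  define \<delta> where "\<delta> j = (if j = i then 1 else 0 :: real)" for j
  have "\<delta> \<in> simplex_weights" by (simp add: simplex_weights_def \<delta>_def)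
  moreover have "is_weighted_argmin f \<delta> z"
    using assms by (simp add: is_weighted_argmin_def \<delta>_def mult_if_delta)
  ultimately show ?thesis by (rule weighted_argmin_in_pareto_set)
qed

lemma exists_minimizers:
  obtains m where "\<And>i y. f i (m i) \<le> f i y"
proof -
  have "\<forall>i. \<exists>z. \<forall>y. f i z \<le> f i y"
  proof
    fix i
    have "continuous_on UNIV (f i)"
      by (rule has_derivative_continuous_on, rule has_derivative_at_withinI[OF has_derivative_f])
    then show "\<exists>z. \<forall>y. f i z \<le> f i y"
      using strongly_convex_attains_minimum[OF mu_pos _ quadratic_lower_bound] by blast
  qed
  then obtain m where "\<forall>i. \<forall>y. f i (m i) \<le> f i y" by (rule choice[THEN exE])
  then show thesis using that by blast
qed

lemma bounded_pareto_set: "bounded (pareto_set f)"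
proof -
  obtain m where m: "\<And>i y. f i (m i) \<le> f i y" using exists_minimizers by blast
  have "{p. f i p \<le> f i 0} \<subseteq> cball (m i) (sqrt (2 * (f i 0 - f i (m i)) / \<mu>))" for i
  proof
    fix p assume "p \<in> {p. f i p \<le> f i 0}"
    then have "f i (m i) + \<mu> / 2 * (norm (p - m i))\<^sup>2 \<le> f i 0"
      using quadratic_lower_bound[of i "m i" p] grad_eq_0_at_minimizer[OF m] by simp
    then have "(norm (p - m i))\<^sup>2 \<le> 2 * (f i 0 - f i (m i)) / \<mu>"
      using mu_pos by (simp add: field_simps)
    then show "p \<in> cball (m i) (sqrt (2 * (f i 0 - f i (m i)) / \<mu>))"
      by (simp add: dist_norm norm_minus_commute real_le_rsqrt)
  qed
  then have "bounded {p. f i p \<le> f i 0}" for i by (rule bounded_subset[OF bounded_cball])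
  then have "bounded (\<Union>i. {p. f i p \<le> f i 0})" by (simp add: bounded_UN)
  then show ?thesis by (rule bounded_subset[OF _ pareto_set_subset_sublevel_sets])
qed

end

theorem lemma8:
  fixes f :: "'i::finite \<Rightarrow> 'a::euclidean_space \<Rightarrow> real"
    and grad :: "'i \<Rightarrow> 'a \<Rightarrow> 'a"
    and hess :: "'i \<Rightarrow> 'a \<Rightarrow> 'a \<Rightarrow> 'a"
    and \<mu> L :: real
  assumes mu_pos: "0 < \<mu>" and mu_le_L: "\<mu> \<le> L"
    and grad_deriv: "\<And>i x. (f i has_derivative (\<lambda>h. grad i x \<bullet> h)) (at x)"
    and hess_deriv: "\<And>i x. (grad i has_derivative hess i x) (at x)"
    and hess_lower: "\<And>i x v. \<mu> * (norm v)\<^sup>2 \<le> v \<bullet> hess i x v"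
    and hess_upper: "\<And>i x v. v \<bullet> hess i x v \<le> L * (norm v)\<^sup>2"
    and beta: "\<beta> \<in> simplex_weights" and beta': "\<beta>' \<in> simplex_weights"
    and xmin: "is_weighted_argmin f \<beta> x" and xmin': "is_weighted_argmin f \<beta>' x'"
  shows "norm (x - x') \<le> L * diameter (pareto_set f) / \<mu> * (\<Sum>i\<in>UNIV. \<bar>\<beta> i - \<beta>' i\<bar>)"
proof -
  interpret strongly_convex_family f grad \<mu>
    using mu_pos grad_deriv quadratic_lower_bound_of_hessian[OF grad_deriv hess_deriv hess_lower]
    by unfold_locales auto
  obtain m where m: "\<And>i y. f i (m i) \<le> f i y" using exists_minimizers by blast
  have x'_pareto: "x' \<in> pareto_set f" by (rule weighted_argmin_in_pareto_set[OF beta' xmin'])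
  have "norm (grad i x') \<le> L * diameter (pareto_set f)" for i
  proof -
    have "norm (grad i x') \<le> L * norm (x' - m i)"
    proof (rule norm_gradient_le_of_quadratic_upper_bound[where F = "f i" and G = "grad i"])
      show "0 < L" using mu_pos mu_le_L by linarith
      show "\<And>x y. f i y \<le> f i x + grad i x \<bullet> (y - x) + L / 2 * (norm (y - x))\<^sup>2"
        by (rule quadratic_upper_bound_of_hessian[OF grad_deriv hess_deriv hess_upper])
    qed (use m grad_eq_0_at_minimizer[OF m] in auto)
    also have "\<dots> \<le> L * diameter (pareto_set f)"
      using diameter_bounded_bound[OF bounded_pareto_set x'_pareto minimizer_in_pareto_set[OF m]]
        mu_pos mu_le_L
      by (intro mult_left_mono) (auto simp: dist_norm)
    finally show ?thesis .
  qed
  then show ?thesis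
    by (rule norm_diff_weighted_critical_points_le[OF mu_pos beta gradient_strongly_monotone
          weighted_gradient_eq_0[OF xmin] weighted_gradient_eq_0[OF xmin']])
qed

end
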